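(* For any integer $n\ge3$, with $P_n$ and $C_n$ the path and cycle of order $n$, $\gamma_{(2,2,0)}(P_n)=\gamma_{(2,2,0)}(C_n)=2\lceil n/3\rceil$.
   Context: $N(v)$ is the open neighbourhood. $\gamma_{(2,2,0)}(G)$ is the minimum of $\sum_v f(v)$ over functions $f:V(G)\to\{0,1,2\}$ such that $\sum_{u\in N(v)}f(u)\ge2$ for every $v$ with $f(v)\in\{0,1\}$. *)

theory Defs
  imports Complex_Main
begin

text \<open>A simple graph is given by a vertex set V and a symmetric irreflexive adjacency E.\<close>

definition open_nbhd :: "'a set \<Rightarrow> ('a \<Rightarrow> 'a \<Rightarrow> bool) \<Rightarrow> 'a \<Rightarrow> 'a set" where
  "open_nbhd V E v = {u \<in> V. E v u}"

definition is_220_function :: "'a set \<Rightarrow> ('a \<Rightarrow> 'a \<Rightarrow> bool) \<Rightarrow> ('a \<Rightarrow> nat) \<Rightarrow> bool" where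
  "is_220_function V E f \<longleftrightarrow>
     (\<forall>v\<in>V. f v \<in> {0, 1, 2}) \<and>
     (\<forall>v\<in>V. f v \<in> {0, 1} \<longrightarrow> (\<Sum>u\<in>open_nbhd V E v. f u) \<ge> 2)"

definition gamma_220 :: "'a set \<Rightarrow> ('a \<Rightarrow> 'a \<Rightarrow> bool) \<Rightarrow> nat" where
  "gamma_220 V E = Min {(\<Sum>v\<in>V. f v) | f. is_220_function V E f}"

text \<open>Path P_n and cycle C_n on vertex set {0..<n}.\<close>

definition path_adj :: "nat \<Rightarrow> nat \<Rightarrow> bool" where
  "path_adj i j \<longleftrightarrow> i + 1 = j \<or> j + 1 = i"

definition cycle_adj :: "nat \<Rightarrow> nat \<Rightarrow> nat \<Rightarrow> bool" where
  "cycle_adj n i j \<longleftrightarrow> (i + 1) mod n = j \<or> (j + 1) mod n = i"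

end

(* Let f be a (2,2,0)-function of weight W on a 2-regular graph with n vertices.  Every vertex
   lies in exactly three closed neighbourhoods, so the closed-neighbourhood weights of f add up
   to 3W.  Each of them is at least 2, hence 3W >= 2n.  If W is odd, some vertex has weight 1;
   its closed weight is at least 3, and so is the closed weight of a second vertex at distance at
   most two, hence 3W >= 2n + 2.  In both cases W >= 2 ceil(n/3).  The cycle C_n is 2-regular,
   every (2,2,0)-function of P_n is one of C_n, and weight 2 on the vertices 1, 4, 7, ... of P_n
   attains the bound. *)
theory Submission
  imports Defs
begin

lemma is_220_function_mono:
  assumes "\<And>u v. u \<in> V \<Longrightarrow> v \<in> V \<Longrightarrow> E u v \<Longrightarrow> E' u v"
    and "finite V" and "is_220_function V E f"
  shows "is_220_function V E' f"
  unfolding is_220_function_def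
proof (intro conjI ballI impI)
  fix v assume v: "v \<in> V"
  then show "f v \<in> {0, 1, 2}" using assms(3) by (simp add: is_220_function_def)
  assume "f v \<in> {0, 1}"
  then have "2 \<le> (\<Sum>u\<in>open_nbhd V E v. f u)" using assms(3) v unfolding is_220_function_def by blast
  also have "\<dots> \<le> (\<Sum>u\<in>open_nbhd V E' v. f u)"
    by (rule sum_mono2) (use assms v in \<open>auto simp: open_nbhd_def\<close>)
  finally show "2 \<le> (\<Sum>u\<in>open_nbhd V E' v. f u)" .
qed

lemma finite_220_weights:
  assumes "finite V"
  shows "finite {(\<Sum>v\<in>V. f v) | f. is_220_function V E f}"
proof (rule finite_subset)
  show "{(\<Sum>v\<in>V. f v) | f. is_220_function V E f} \<subseteq> {..2 * card V}"
  proof clarify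
    fix f assume "is_220_function V E f"
    then have "(\<Sum>v\<in>V. f v) \<le> (\<Sum>v\<in>V. 2)"
      by (intro sum_mono) (auto simp: is_220_function_def)
    then show "(\<Sum>v\<in>V. f v) \<le> 2 * card V" by simp
  qed
qed simp

lemma gamma_220_le:
  assumes "finite V" and "is_220_function V E f"
  shows "gamma_220 V E \<le> (\<Sum>v\<in>V. f v)"
  unfolding gamma_220_def by (rule Min_le) (use assms finite_220_weights in auto)

lemma gamma_220_attained:
  assumes "finite V"
  obtains f where "is_220_function V E f" and "gamma_220 V E = (\<Sum>v\<in>V. f v)"
proof -
  have "is_220_function V E (\<lambda>_. 2)" by (simp add: is_220_function_def)
  then have "gamma_220 V E \<in> {(\<Sum>v\<in>V. f v) | f. is_220_function V E f}"
    unfolding gamma_220_def by (intro Min_in finite_220_weights assms) auto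
  then show thesis using that by blast
qed

lemma sum_open_nbhd_swap:
  assumes "finite V" and sym: "\<And>u v. u \<in> V \<Longrightarrow> v \<in> V \<Longrightarrow> E u v \<Longrightarrow> E v u"
  shows "(\<Sum>v\<in>V. \<Sum>u\<in>open_nbhd V E v. f u) = (\<Sum>u\<in>V. card (open_nbhd V E u) * f u)"
proof -
  have "(\<Sum>v\<in>V. \<Sum>u\<in>open_nbhd V E v. f u) = (\<Sum>v\<in>V. \<Sum>u\<in>V. if E v u then f u else 0)"
    unfolding open_nbhd_def using assms(1) by (simp add: sum.inter_filter)
  also have "\<dots> = (\<Sum>u\<in>V. \<Sum>v\<in>V. if E v u then f u else 0)"
    by (rule sum.swap)
  also have "\<dots> = (\<Sum>u\<in>V. card {v\<in>V. E v u} * f u)"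
    using assms(1) by (simp add: sum.inter_filter[symmetric])
  also have "\<dots> = (\<Sum>u\<in>V. card (open_nbhd V E u) * f u)"
  proof (rule sum.cong)
    fix u assume "u \<in> V"
    then have "{v\<in>V. E v u} = open_nbhd V E u" using sym by (auto simp: open_nbhd_def)
    then show "card {v\<in>V. E v u} * f u = card (open_nbhd V E u) * f u" by simp
  qed simp
  finally show ?thesis .
qed

definition two_regular :: "'a set \<Rightarrow> ('a \<Rightarrow> 'a \<Rightarrow> bool) \<Rightarrow> bool" where
  "two_regular V E \<longleftrightarrow>
     (\<forall>u\<in>V. \<forall>v\<in>V. E u v \<longrightarrow> E v u) \<and>
     (\<forall>v\<in>V. \<not> E v v \<and> card (open_nbhd V E v) = 2)"

definition closed_weight :: "'a set \<Rightarrow> ('a \<Rightarrow> 'a \<Rightarrow> bool) \<Rightarrow> ('a \<Rightarrow> nat) \<Rightarrow> 'a \<Rightarrow> nat" where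
  "closed_weight V E f v = f v + (\<Sum>u\<in>open_nbhd V E v. f u)"

lemma closed_weight_ge_2:
  assumes "is_220_function V E f" and "v \<in> V"
  shows "2 \<le> closed_weight V E f v"
  using assms unfolding is_220_function_def closed_weight_def by force

lemma closed_weight_ge_3:
  assumes "is_220_function V E f" and "v \<in> V" and "f v = 1"
  shows "3 \<le> closed_weight V E f v"
  using assms unfolding is_220_function_def closed_weight_def by force

lemma sum_closed_weight_two_regular:
  assumes "finite V" and "two_regular V E"
  shows "(\<Sum>v\<in>V. closed_weight V E f v) = 3 * (\<Sum>v\<in>V. f v)"
proof -
  have "(\<Sum>v\<in>V. \<Sum>u\<in>open_nbhd V E v. f u) = (\<Sum>u\<in>V. card (open_nbhd V E u) * f u)"
    by (rule sum_open_nbhd_swap) (use assms in \<open>auto simp: two_regular_def\<close>)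
  also have "\<dots> = 2 * (\<Sum>v\<in>V. f v)"
    using assms(2) by (simp add: two_regular_def sum_distrib_left)
  finally show ?thesis by (simp add: closed_weight_def sum.distrib)
qed

lemma two_regular_other_neighbour:
  assumes "two_regular V E" and "u \<in> V" and "v \<in> open_nbhd V E u"
  obtains w where "open_nbhd V E u = {v, w}" and "w \<noteq> v" and "w \<noteq> u"
proof -
  obtain x y where xy: "open_nbhd V E u = {x, y}" "x \<noteq> y"
    using assms(1,2) card_2_iff[of "open_nbhd V E u"] by (auto simp: two_regular_def)
  have "u \<notin> open_nbhd V E u" using assms(1,2) by (simp add: two_regular_def open_nbhd_def)
  then show thesis using that xy assms(3) by (auto simp: insert_commute)
qed

text \<open>If the weight-1 vertex v sits next to a vertex u of closed weight 2, the other neighbour of u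
  must carry weight 1 as well.\<close>
lemma two_regular_second_heavy_vertex:
  assumes reg: "two_regular V E" and f: "is_220_function V E f"
    and v: "v \<in> V" "f v = 1"
  obtains w where "w \<in> V" and "w \<noteq> v" and "3 \<le> closed_weight V E f w"
proof -
  obtain u where u: "u \<in> open_nbhd V E v"
    using reg v(1) by (fastforce simp: two_regular_def)
  then have "u \<in> V" "u \<noteq> v" "v \<in> open_nbhd V E u"
    using reg v(1) by (auto simp: two_regular_def open_nbhd_def)
  then obtain w where w: "open_nbhd V E u = {v, w}" "w \<noteq> v" "w \<noteq> u"
    using reg two_regular_other_neighbour by metis
  have "w \<in> V" using w(1) by (auto simp: open_nbhd_def)
  show thesis
  proof (cases "3 \<le> closed_weight V E f u")
    case True
    then show thesis using that \<open>u \<in> V\<close> \<open>u \<noteq> v\<close> by blast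
  next
    case False
    then have "f u + f w = 1"
      using closed_weight_ge_2[OF f \<open>u \<in> V\<close>] w v(2) by (simp add: closed_weight_def)
    moreover have "f u \<noteq> 1" using False closed_weight_ge_3[OF f \<open>u \<in> V\<close>] by auto
    ultimately have "f w = 1" by simp
    then show thesis using that \<open>w \<in> V\<close> w(2) closed_weight_ge_3[OF f \<open>w \<in> V\<close>] by blast
  qed
qed

lemma sum_ge_with_two_excess:
  fixes g :: "'a \<Rightarrow> nat"
  assumes "finite A" and "\<And>z. z \<in> A \<Longrightarrow> k \<le> g z"
    and "x \<in> A" "y \<in> A" "x \<noteq> y" "k < g x" "k < g y"
  shows "k * card A + 2 \<le> (\<Sum>z\<in>A. g z)"
proof -
  have "A \<inter> {z. z = x \<or> z = y} = {x, y}" using assms(3,4) by auto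
  then have "k * card A + 2 = (\<Sum>z\<in>A. k + (if z = x \<or> z = y then 1 else 0))"
    using assms(1,5) by (simp add: sum.distrib sum.If_cases)
  also have "\<dots> \<le> (\<Sum>z\<in>A. g z)"
    by (rule sum_mono) (use assms in auto)
  finally show ?thesis .
qed

lemma double_ceiling_third_le:
  fixes n W :: nat
  assumes "2 * n \<le> 3 * W" and "even W \<or> 2 * n + 2 \<le> 3 * W"
  shows "2 * ((n + 2) div 3) \<le> W"
proof -
  have "n \<le> 3 * (W div 2)" using assms by (elim disjE evenE) auto
  then have "(n + 2) div 3 < W div 2 + 1" by (intro less_mult_imp_div_less) simp
  then show ?thesis by simp
qed

lemma two_regular_220_weight_ge:
  assumes "finite V" and reg: "two_regular V E" and f: "is_220_function V E f"
  shows "2 * ((card V + 2) div 3) \<le> (\<Sum>v\<in>V. f v)"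
proof -
  let ?W = "\<Sum>v\<in>V. f v"
  have W: "(\<Sum>v\<in>V. closed_weight V E f v) = 3 * ?W"
    using sum_closed_weight_two_regular[OF assms(1,2)] .
  have "2 * card V \<le> 3 * ?W"
    using sum_bounded_below[of V 2 "closed_weight V E f"] closed_weight_ge_2[OF f] W by auto
  moreover have "2 * card V + 2 \<le> 3 * ?W" if "odd ?W"
  proof -
    have "\<not> (\<forall>v\<in>V. even (f v))" using that by (metis dvd_sum)
    then obtain v where v: "v \<in> V" "f v = 1"
      using f by (fastforce simp: is_220_function_def)
    then obtain w where "w \<in> V" "w \<noteq> v" "3 \<le> closed_weight V E f w"
      using two_regular_second_heavy_vertex[OF reg f] by metis
    then have "2 * card V + 2 \<le> (\<Sum>v\<in>V. closed_weight V E f v)"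
      using sum_ge_with_two_excess[of V 2 "closed_weight V E f" v w] assms(1) v
        closed_weight_ge_2[OF f] closed_weight_ge_3[OF f] by fastforce
    then show ?thesis using W by simp
  qed
  ultimately show ?thesis by (metis double_ceiling_third_le)
qed

definition cycle_succ :: "nat \<Rightarrow> nat \<Rightarrow> nat" where
  "cycle_succ n v = (if v + 1 = n then 0 else v + 1)"

definition cycle_pred :: "nat \<Rightarrow> nat \<Rightarrow> nat" where
  "cycle_pred n v = (if v = 0 then n - 1 else v - 1)"

lemma cycle_succ_eq_mod:
  assumes "u < n"
  shows "Suc u mod n = cycle_succ n u"
  using assms by (auto simp: cycle_succ_def)

lemma cycle_open_nbhd:
  assumes "v < n"
  shows "open_nbhd {0..<n} (cycle_adj n) v = {cycle_succ n v, cycle_pred n v}"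
proof -
  have "u < n \<and> (Suc v mod n = u \<or> Suc u mod n = v) \<longleftrightarrow>
        u = cycle_succ n v \<or> u = cycle_pred n v" for u
    using assms by (cases "u < n") (auto simp: cycle_succ_eq_mod cycle_succ_def cycle_pred_def)
  then show ?thesis by (auto simp: open_nbhd_def cycle_adj_def)
qed

lemma two_regular_cycle:
  assumes "n \<ge> 3"
  shows "two_regular {0..<n} (cycle_adj n)"
  unfolding two_regular_def
proof (intro conjI ballI)
  fix v assume "v \<in> {0..<n}"
  then show "\<not> cycle_adj n v v" and "card (open_nbhd {0..<n} (cycle_adj n) v) = 2"
    using assms by (auto simp: cycle_adj_def cycle_succ_eq_mod cycle_open_nbhd cycle_succ_def cycle_pred_def)
qed (auto simp: cycle_adj_def)

lemma path_adj_imp_cycle_adj: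
  assumes "u < n" and "v < n" and "path_adj u v"
  shows "cycle_adj n u v"
  using assms by (auto simp: path_adj_def cycle_adj_def)

text \<open>Weight 2 on the vertices 1, 4, 7, ...; for n = 1 (mod 3) the last vertex would be left
  undominated and gets weight 2 as well.\<close>
definition path_220_witness :: "nat \<Rightarrow> nat \<Rightarrow> nat" where
  "path_220_witness n i = (if i mod 3 = 1 \<or> (i = n - 1 \<and> n mod 3 = 1) then 2 else 0)"

lemma sum_every_third:
  "(\<Sum>i\<in>{0..<n}. if i mod 3 = 1 then 2 else 0 :: nat) = 2 * ((n + 1) div 3)"
proof (induction n)
  case (Suc n)
  have "2 * ((n + 1) div 3) + (if n mod 3 = 1 then 2 else 0) = 2 * ((Suc n + 1) div 3)"
    by presburger
  then show ?case using Suc by simp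
qed simp

lemma sum_path_220_witness:
  "(\<Sum>i\<in>{0..<n}. path_220_witness n i) = 2 * ((n + 2) div 3)"
proof (cases "n mod 3 = 1")
  case True
  then obtain p where p: "n = Suc p" by (cases n) auto
  have "(\<Sum>i\<in>{0..<p}. path_220_witness n i) = (\<Sum>i\<in>{0..<p}. if i mod 3 = 1 then 2 else 0)"
    by (rule sum.cong) (use p in \<open>auto simp: path_220_witness_def\<close>)
  then show ?thesis using sum_every_third[of p] True p by (simp add: path_220_witness_def) presburger
next
  case False
  then have "(\<Sum>i\<in>{0..<n}. path_220_witness n i) = (\<Sum>i\<in>{0..<n}. if i mod 3 = 1 then 2 else 0)"
    by (intro sum.cong) (auto simp: path_220_witness_def)
  then show ?thesis using sum_every_third[of n] False by simp presburger
qed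

lemma is_220_function_path_witness:
  "is_220_function {0..<n} path_adj (path_220_witness n)"
  unfolding is_220_function_def
proof (intro conjI ballI impI)
  fix v assume v: "v \<in> {0..<n}"
  show "path_220_witness n v \<in> {0, 1, 2}" by (simp add: path_220_witness_def)
  assume "path_220_witness n v \<in> {0, 1}"
  then have v_light: "v mod 3 \<noteq> 1" "v + 1 = n \<longrightarrow> n mod 3 \<noteq> 1"
    using v by (auto simp: path_220_witness_def split: if_splits)
  obtain u where u: "u \<in> open_nbhd {0..<n} path_adj v" "path_220_witness n u = 2"
  proof (cases "v mod 3 = 0")
    case True
    then have "(v + 1) mod 3 = 1" by (simp add: mod_Suc)
    then have "v + 1 \<noteq> n" using v_light(2) by blast
    then have "v + 1 < n" using v by simp
    moreover note \<open>(v + 1) mod 3 = 1\<close>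
    ultimately show thesis using that[of "v + 1"]
      by (simp add: open_nbhd_def path_adj_def path_220_witness_def)
  next
    case False
    then have "v mod 3 = 2" using v_light(1) by linarith
    then have "v \<ge> 1" "(v - 1) mod 3 = 1" by (cases v; auto simp: mod_Suc split: if_splits)+
    then show thesis using that[of "v - 1"] v
      by (simp add: open_nbhd_def path_adj_def path_220_witness_def)
  qed
  have "path_220_witness n u \<le> (\<Sum>w\<in>open_nbhd {0..<n} path_adj v. path_220_witness n w)"
    by (rule member_le_sum) (use u in \<open>auto simp: open_nbhd_def\<close>)
  then show "2 \<le> (\<Sum>w\<in>open_nbhd {0..<n} path_adj v. path_220_witness n w)" using u by simp
qed

lemma ceiling_third_eq: "\<lceil>real n / 3\<rceil> = int ((n + 2) div 3)"
proof (rule ceiling_unique)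
  obtain q r where qr: "n = 3 * q + r" "r < 3"
    by (metis div_mult_mod_eq mod_less_divisor zero_less_numeral mult.commute)
  then have "r = 0 \<or> r = 1 \<or> r = 2" by auto
  then show "real_of_int (int ((n + 2) div 3)) - 1 < real n / 3"
    and "real n / 3 \<le> real_of_int (int ((n + 2) div 3))"
    using qr by auto
qed

theorem proposition35:
  fixes n :: nat
  assumes "n \<ge> 3"
  shows "int (gamma_220 {0..<n} path_adj) = 2 * \<lceil>real n / 3\<rceil>
       \<and> int (gamma_220 {0..<n} (cycle_adj n)) = 2 * \<lceil>real n / 3\<rceil>"
proof -
  let ?V = "{0..<n}" and ?k = "2 * ((n + 2) div 3)"
  have path_to_cycle: "is_220_function ?V (cycle_adj n) f" if "is_220_function ?V path_adj f" for f
    using is_220_function_mono[OF _ _ that] path_adj_imp_cycle_adj by simp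
  have lower: "?k \<le> (\<Sum>v\<in>?V. f v)" if "is_220_function ?V (cycle_adj n) f" for f
    using two_regular_220_weight_ge[OF _ two_regular_cycle[OF assms] that] by simp
  have upper: "gamma_220 ?V E \<le> ?k" if "is_220_function ?V E (path_220_witness n)" for E
    using gamma_220_le[OF _ that] sum_path_220_witness by simp
  obtain fP where fP: "is_220_function ?V path_adj fP" "gamma_220 ?V path_adj = (\<Sum>v\<in>?V. fP v)"
    using gamma_220_attained by blast
  obtain fC where fC: "is_220_function ?V (cycle_adj n) fC"
      "gamma_220 ?V (cycle_adj n) = (\<Sum>v\<in>?V. fC v)"
    using gamma_220_attained by blast
  have "gamma_220 ?V path_adj = ?k"
    using upper[OF is_220_function_path_witness] lower[OF path_to_cycle[OF fP(1)]] fP(2) by simp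
  moreover have "gamma_220 ?V (cycle_adj n) = ?k"
    using upper[OF path_to_cycle[OF is_220_function_path_witness]] lower[OF fC(1)] fC(2) by simp
  ultimately show ?thesis by (simp add: ceiling_third_eq)
qed

end
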